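(* Let $\mathcal{S}$ be an $F$-weighted boundary stratum and $U\subset A_\mathcal{S}$ a subtorus. Then $$\dim T_\mathcal{S}-\dim(U\cap T_\mathcal{S})=\dim_{\mathbb{Q}}\mathrm{ev}(\mathrm{Ann}(U)).$$ In particular, $\dim T_\mathcal{S}=\dim_{\mathbb{Q}}\mathrm{ev}(N(\mathcal{S}))$.
   Context: $F$ is a totally real number field of degree $g$ with trace pairing $\langle x,y\rangle=\mathrm{Tr}_{F/\mathbb{Q}}(xy)$. For a lattice $\mathcal{I}\subset F$, $\mathcal{I}^\vee=\{x:\langle x,y\rangle\in\mathbb{Z}\ \forall y\in\mathcal{I}\}$. An $\mathcal{I}$-weighted stable curve is a stable curve of arithmetic genus $g$ and geometric genus $0$ with an element of $\mathcal{I}$ attached to each branch at each node, such that branches at a node have opposite weights, weights on each component sum to zero, and the weights span $\mathcal{I}$. An $F$-weighted boundary stratum $\mathcal{S}$ is the moduli space of such weighted curves topologically equivalent (weight-preservingly) to a fixed one. $\mathrm{Sym}_{\mathbb{Q}}(F)\subset F\otimes_{\mathbb{Q}}F$ is the symmetric tensors, $\mathbf{S}_{\mathbb{Q}}(F)$ the quotient of $F\otimes_{\mathbb{Q}}F$ by the span of $x\otimes y-y\otimes x$ (and $\mathbf{S}_{\mathbb{Z}}(\mathcal{I}^\vee)$ similarly), dual via $\langle a\otimes b,c\otimes d\rangle=\langle a,c\rangle\langle b,d\rangle$. $N(\mathcal{S})\subset\mathbf{S}_{\mathbb{Q}}(F)$ is the annihilator of the span of $r\otimes r$ over the weights $r$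 of $\mathcal{S}$. $\Lambda^1=\{x\in F\otimes_{\mathbb{Q}}F:\lambda x=x\lambda\ \forall\lambda\in F\}\subset\mathrm{Sym}_{\mathbb{Q}}(F)$, with annihilator $\mathrm{Ann}(\Lambda^1)\subset\mathbf{S}_{\mathbb{Q}}(F)$. The ambient torus is $A_\mathcal{S}=\mathrm{Hom}_{\mathbb{Z}}(N(\mathcal{S})\cap\mathbf{S}_{\mathbb{Z}}(\mathcal{I}^\vee),\mathbb{G}_m)$, so its rational character space is $\chi(A_\mathcal{S})\otimes\mathbb{Q}=N(\mathcal{S})$; for a subtorus $U$, $\mathrm{Ann}(U)\subset N(\mathcal{S})$ is the subspace of rational characters trivial on $U$. The RM-torus $T_\mathcal{S}$ is the kernel of the restriction map $A_\mathcal{S}\to\mathrm{Hom}(N(\mathcal{S})\cap\mathrm{Ann}(\Lambda^1)\cap\mathbf{S}_{\mathbb{Z}}(\mathcal{I}^\vee),\mathbb{G}_m)$, so $\mathrm{Ann}(T_\mathcal{S})=N(\mathcal{S})\cap\mathrm{Ann}(\Lambda^1)$. The evaluation map is $\mathrm{ev}\colon\mathbf{S}_{\mathbb{Q}}(F)\to F$, $\mathrm{ev}(s\otimes t)=st$. *)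

theory Defs
  imports Complex_Main "HOL-Library.Function_Algebras"
begin

definition qs :: "rat \<Rightarrow> 'f::field_char_0 \<Rightarrow> 'f" where
  "qs q x = of_rat q * x"

definition totally_real_number_field :: "'f::field_char_0 itself \<Rightarrow> nat \<Rightarrow> bool" where
  "totally_real_number_field TYPE('f) g \<longleftrightarrow>
     (\<exists>B::'f set. finite B \<and> module.span qs B = UNIV) \<and>
     vector_space.dim qs (UNIV::'f set) = g \<and>
     (\<forall>\<sigma>::'f \<Rightarrow> complex.
        (\<sigma> 1 = 1 \<and> (\<forall>x y. \<sigma> (x + y) = \<sigma> x + \<sigma> y) \<and> (\<forall>x y. \<sigma> (x * y) = \<sigma> x * \<sigma> y))
        \<longrightarrow> (\<forall>x. \<sigma> x \<in> \<real>))"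

text \<open>A fixed Q-basis of F (used only to define the trace; the trace does not depend on it).\<close>
definition fbasis :: "'f::field_char_0 set" where
  "fbasis = (SOME B. \<not> module.dependent qs B \<and> module.span qs B = UNIV)"

text \<open>Tr_{F/Q}(x): trace of the Q-linear map y \<mapsto> x*y, computed in the basis fbasis.\<close>
definition trF :: "'f::field_char_0 \<Rightarrow> rat" where
  "trF x = (\<Sum>b\<in>fbasis. module.representation qs fbasis (x * b) b)"

definition tpair :: "'f::field_char_0 \<Rightarrow> 'f \<Rightarrow> rat" where
  "tpair x y = trF (x * y)"

definition zspan :: "'f::field_char_0 set \<Rightarrow> 'f set" where
  "zspan X = {\<Sum>x\<in>X'. of_int (n x) * x | X' n. finite X' \<and> X' \<subseteq> X}"

definition is_lattice :: "'f::field_char_0 set \<Rightarrow> bool" where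
  "is_lattice I \<longleftrightarrow> (\<exists>B. finite B \<and> \<not> module.dependent qs B \<and> module.span qs B = UNIV
                        \<and> I = zspan B)"

text \<open>An element x of F \<otimes>_Q F is represented by the Q-bilinear form (c,d) \<mapsto> <x, c \<otimes> d>,
  where <a\<otimes>b, c\<otimes>d> = <a,c><b,d>. (Injective and onto bilinear forms since the trace
  pairing is perfect.)  Thus the pure tensor s \<otimes> t is (c,d) \<mapsto> <s,c><t,d>.\<close>

definition ptens :: "'f::field_char_0 \<Rightarrow> 'f \<Rightarrow> ('f \<Rightarrow> 'f \<Rightarrow> rat)" where
  "ptens s t = (\<lambda>c d. tpair s c * tpair t d)"

definition bscale :: "rat \<Rightarrow> ('f \<Rightarrow> 'f \<Rightarrow> rat) \<Rightarrow> ('f \<Rightarrow> 'f \<Rightarrow> rat)" where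
  "bscale q x = (\<lambda>c d. q * x c d)"

definition TensQ :: "('f::field_char_0 \<Rightarrow> 'f \<Rightarrow> rat) set" where
  "TensQ = module.span bscale {ptens s t | s t. True}"

definition SymQ :: "('f::field_char_0 \<Rightarrow> 'f \<Rightarrow> rat) set" where
  "SymQ = {x \<in> TensQ. (\<lambda>c d. x d c) = x}"

text \<open>Left/right multiplication: \<lambda>(s\<otimes>t) = (\<lambda>s)\<otimes>t, (s\<otimes>t)\<lambda> = s\<otimes>(t\<lambda>); in the bilinear-form
  model these are x \<mapsto> ((c,d) \<mapsto> x(\<lambda>c,d)) resp. x \<mapsto> ((c,d) \<mapsto> x(c,\<lambda>d)).\<close>
definition lmul :: "'f::field_char_0 \<Rightarrow> ('f \<Rightarrow> 'f \<Rightarrow> rat) \<Rightarrow> ('f \<Rightarrow> 'f \<Rightarrow> rat)" where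
  "lmul l x = (\<lambda>c d. x (l * c) d)"

definition rmul :: "('f::field_char_0 \<Rightarrow> 'f \<Rightarrow> rat) \<Rightarrow> 'f \<Rightarrow> ('f \<Rightarrow> 'f \<Rightarrow> rat)" where
  "rmul x l = (\<lambda>c d. x c (l * d))"

definition Lambda1 :: "('f::field_char_0 \<Rightarrow> 'f \<Rightarrow> rat) set" where
  "Lambda1 = {x \<in> TensQ. \<forall>l. lmul l x = rmul x l}"

text \<open>S_Q(F) = (F \<otimes> F)/(x\<otimes>y - y\<otimes>x) is represented via the perfect pairing with Sym_Q(F):
  the class of s \<otimes> t is the functional y \<mapsto> <s\<otimes>t, y> = y(s,t) on Sym_Q(F)
  (extended by 0 outside Sym_Q(F)).\<close>

definition sclass :: "'f::field_char_0 \<Rightarrow> 'f \<Rightarrow> (('f \<Rightarrow> 'f \<Rightarrow> rat) \<Rightarrow> rat)" where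
  "sclass s t = (\<lambda>y. if y \<in> SymQ then y s t else 0)"

definition sscale :: "rat \<Rightarrow> (('f \<Rightarrow> 'f \<Rightarrow> rat) \<Rightarrow> rat) \<Rightarrow> (('f \<Rightarrow> 'f \<Rightarrow> rat) \<Rightarrow> rat)" where
  "sscale q p = (\<lambda>y. q * p y)"

definition SQ :: "(('f::field_char_0 \<Rightarrow> 'f \<Rightarrow> rat) \<Rightarrow> rat) set" where
  "SQ = module.span sscale {sclass s t | s t. True}"

definition NS :: "'f::field_char_0 set \<Rightarrow> (('f \<Rightarrow> 'f \<Rightarrow> rat) \<Rightarrow> rat) set" where
  "NS R = {p \<in> SQ. \<forall>y \<in> module.span bscale ((\<lambda>r. ptens r r) ` R). p y = 0}"

definition AnnLambda1 :: "(('f::field_char_0 \<Rightarrow> 'f \<Rightarrow> rat) \<Rightarrow> rat) set" where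
  "AnnLambda1 = {p \<in> SQ. \<forall>y \<in> Lambda1. p y = 0}"

definition evS :: "(('f::field_char_0 \<Rightarrow> 'f \<Rightarrow> rat) \<Rightarrow> rat) \<Rightarrow> 'f" where
  "evS p = (THE v. \<exists>(n::nat) c s t. p = (\<Sum>i<n. sscale (c i) (sclass (s i) (t i)))
                          \<and> v = (\<Sum>i<n. qs (c i) (s i * t i)))"

definition dimS :: "(('f::field_char_0 \<Rightarrow> 'f \<Rightarrow> rat) \<Rightarrow> rat) set \<Rightarrow> nat" where
  "dimS W = vector_space.dim sscale W"

definition dimF :: "'f::field_char_0 set \<Rightarrow> nat" where
  "dimF V = vector_space.dim qs V"

definition ssum :: "('a::plus) set \<Rightarrow> 'a set \<Rightarrow> 'a set" where
  "ssum A B = {a + b | a b. a \<in> A \<and> b \<in> B}"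

text \<open>A stable curve of arithmetic genus g and geometric genus 0 is encoded by its dual graph:
  vertices V (components, all rational), edges E (nodes), ends e = (u,v) the components
  containing the two branches of the node e.  The weight of the branch at fst(ends e) is w e,
  that of the branch at snd(ends e) is - w e (opposite weights).\<close>

definition valence :: "'v \<Rightarrow> 'e set \<Rightarrow> ('e \<Rightarrow> 'v \<times> 'v) \<Rightarrow> nat" where
  "valence v E ends = card {e \<in> E. fst (ends e) = v} + card {e \<in> E. snd (ends e) = v}"

definition weighted_stable_curve ::
  "nat \<Rightarrow> 'f::field_char_0 set \<Rightarrow> 'v set \<Rightarrow> 'e set \<Rightarrow> ('e \<Rightarrow> 'v \<times> 'v) \<Rightarrow> ('e \<Rightarrow> 'f) \<Rightarrow> bool" where
  "weighted_stable_curve g I V E ends w \<longleftrightarrow>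
     finite V \<and> V \<noteq> {} \<and> finite E \<and>
     (\<forall>e\<in>E. fst (ends e) \<in> V \<and> snd (ends e) \<in> V) \<and>
     \<comment> \<open>connected\<close>
     (\<forall>u\<in>V. \<forall>v\<in>V. (u, v) \<in> ({ends e | e. e \<in> E} \<union> {prod.swap (ends e) | e. e \<in> E})\<^sup>*) \<and>
     \<comment> \<open>arithmetic genus g (all components rational)\<close>
     card E + 1 = card V + g \<and>
     \<comment> \<open>stability: every (rational) component has at least 3 special points\<close>
     (\<forall>v\<in>V. valence v E ends \<ge> 3) \<and>
     \<comment> \<open>weights lie in I\<close>
     (\<forall>e\<in>E. w e \<in> I) \<and>
     \<comment> \<open>weights on each component sum to zero\<close>
     (\<forall>v\<in>V. (\<Sum>e\<in>{e\<in>E. fst (ends e) = v}. w e) + (\<Sum>e\<in>{e\<in>E. snd (ends e) = v}. - w e) = 0) \<and>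
     \<comment> \<open>weights span I\<close>
     zspan (w ` E \<union> uminus ` w ` E) = I"

definition weights :: "'e set \<Rightarrow> ('e \<Rightarrow> 'f::field_char_0) \<Rightarrow> 'f set" where
  "weights E w = w ` E \<union> uminus ` w ` E"

text \<open>A subtorus U of A_S is determined by (and determines) its rational annihilator
  Ann(U), an arbitrary Q-subspace of N(S) = \<chi>(A_S) \<otimes> Q.  For subtori U, U1 one has
  dim U = dim N(S) - dim Ann(U) and Ann(identity component of U meet U1) = Ann(U) + Ann(U1) (rationally).\<close>

definition subtorus_dim :: "(('f::field_char_0 \<Rightarrow> 'f \<Rightarrow> rat) \<Rightarrow> rat) set \<Rightarrow>
    (('f \<Rightarrow> 'f \<Rightarrow> rat) \<Rightarrow> rat) set \<Rightarrow> int" where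
  "subtorus_dim N AnnU = int (dimS N) - int (dimS AnnU)"

definition AnnT :: "'f::field_char_0 set \<Rightarrow> (('f \<Rightarrow> 'f \<Rightarrow> rat) \<Rightarrow> rat) set" where
  "AnnT R = NS R \<inter> AnnLambda1"

end

theory Submission
  imports Defs
begin

text \<open>Pairing \<open>S_Q(F)\<close> with \<open>Sym_Q(F)\<close>, the trace forms \<open>(c, d) \<mapsto> Tr(l c d)\<close> lie in \<open>\<Lambda>\<^sup>1\<close>, and
  every element \<open>y\<close> of \<open>\<Lambda>\<^sup>1\<close> satisfies \<open>y(c, d) = y(1, c d)\<close>.  Together with
  \<open>Tr(l \<cdot> ev p) = p(trace form of l)\<close> and nondegeneracy of the trace pairing this shows that the
  kernel of \<open>ev\<close> on \<open>S_Q(F)\<close> is exactly \<open>Ann(\<Lambda>\<^sup>1)\<close>.  Rank-nullity for \<open>ev\<close> on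
  \<open>Ann(U) + Ann(T_S)\<close>, whose kernel is \<open>Ann(T_S) = N(S) \<inter> Ann(\<Lambda>\<^sup>1)\<close>, then gives
  \<open>dim (Ann(U) + Ann(T_S)) = dim Ann(T_S) + dim ev(Ann(U))\<close>, which is the claim; taking
  \<open>Ann(U) = N(S)\<close> gives the second statement.\<close>

lemma (in vector_space) span_Int_span_disjoint:
  assumes "independent (A \<union> B)" "A \<inter> B = {}"
  shows "span A \<inter> span B = {0}"
proof -
  have "x = 0" if x: "x \<in> span A" "x \<in> span B" for x
  proof -
    have "representation (A \<union> B) x = representation A x"
      "representation (A \<union> B) x = representation B x"
      using representation_extend[OF assms(1) x(1)] representation_extend[OF assms(1) x(2)] by auto
    then have "representation (A \<union> B) x b = 0" for b
      using representation_ne_zero[of A x b] representation_ne_zero[of B x b] assms(2) by auto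
    moreover have "x \<in> span (A \<union> B)" using span_mono[of A "A \<union> B"] x(1) by blast
    ultimately show "x = 0" using sum_nonzero_representation_eq[OF assms(1)] by fastforce
  qed
  then show ?thesis using span_zero by blast
qed

lemma (in vector_space_pair) dim_eq_dim_kernel_plus_dim_image:
  assumes lin: "Vector_Spaces.linear s1 s2 f" and S: "vs1.subspace S"
    and G: "finite G" "S \<subseteq> vs1.span G"
  shows "vs1.dim S = vs1.dim {x \<in> S. f x = 0} + vs2.dim (f ` S)"
proof -
  interpret f: Vector_Spaces.linear s1 s2 f by (fact lin)
  define K where "K = {x \<in> S. f x = 0}"
  have K: "vs1.subspace K" "K \<subseteq> S"
    unfolding K_def using vs1.subspace_inter[OF S f.subspace_kernel] by (auto simp: Int_def)
  obtain BK where BK: "BK \<subseteq> K" "vs1.independent BK" "K \<subseteq> vs1.span BK" "card BK = vs1.dim K"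
    using vs1.basis_exists by blast
  obtain D where D: "BK \<subseteq> D" "D \<subseteq> S" "vs1.independent D" "S \<subseteq> vs1.span D"
    using vs1.maximal_independent_subset_extend[of BK S] BK(1,2) K(2) by blast
  have "finite D" using vs1.independent_span_bound[OF G(1) D(3)] D(2) G(2) by blast
  define D' where "D' = D - BK"
  have D_split: "D = BK \<union> D'" "BK \<inter> D' = {}" using D(1) by (auto simp: D'_def)
  have card_D: "card D = card BK + card D'"
    using \<open>finite D\<close> D_split by (metis card_Un_disjoint finite_Un)
  have span_D: "vs1.span D = S" using vs1.span_subspace[OF D(2,4) S] .
  have span_D'_S: "vs1.span D' \<subseteq> S" using span_D vs1.span_mono[of D' D] D_split by blast
  have "x = 0" if "x \<in> vs1.span D'" "f x = 0" for x
  proof -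
    have "x \<in> vs1.span BK" using that span_D'_S BK(3) unfolding K_def by blast
    then show "x = 0"
      using vs1.span_Int_span_disjoint[of BK D'] D(3) D_split that(1) by auto
  qed
  then have inj: "inj_on f (vs1.span D')"
    using f.inj_on_iff_eq_0[OF vs1.subspace_span] by blast
  have f_BK: "f x = 0" if "x \<in> vs1.span BK" for x
    using that vs1.span_minimal[OF BK(1) K(1)] unfolding K_def by blast
  have "f ` S = f ` vs1.span D'"
  proof
    show "f ` S \<subseteq> f ` vs1.span D'"
    proof
      fix z assume "z \<in> f ` S"
      then obtain x y where "x \<in> vs1.span BK" "y \<in> vs1.span D'" "z = f (x + y)"
        unfolding span_D[symmetric] D_split(1) vs1.span_Un by blast
      then show "z \<in> f ` vs1.span D'" using f_BK f.add by simp
    qed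
    show "f ` vs1.span D' \<subseteq> f ` S" using span_D'_S by blast
  qed
  also have "\<dots> = vs2.span (f ` D')" by (rule f.span_image[symmetric])
  finally have "vs2.dim (f ` S) = card (f ` D')"
    using vs2.dim_span_eq_card_independent f.independent_injective_image[OF _ inj]
      vs1.independent_mono[OF D(3)] D_split(1) by (metis Un_upper2 vs2.dim_span)
  also have "\<dots> = card D'" using card_image[OF inj_on_subset[OF inj vs1.span_superset]] .
  finally have "vs2.dim (f ` S) = card D'" .
  moreover have "vs1.dim S = card D" using vs1.dim_unique[OF D(2,4,3) refl] .
  moreover have "vs1.dim K = card BK" using BK(4) by simp
  ultimately show ?thesis using card_D K_def by simp
qed

lemma (in vector_space_pair) dim_sums_eq_dim_plus_dim_image:
  assumes lin: "Vector_Spaces.linear s1 s2 f" and G: "finite G"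
    and A: "vs1.subspace A" "A \<subseteq> vs1.span G"
    and C: "vs1.subspace C" "C \<subseteq> vs1.span G"
    and C_kernel: "\<And>x. x \<in> C \<Longrightarrow> f x = 0"
    and A_kernel: "\<And>x. x \<in> A \<Longrightarrow> f x = 0 \<Longrightarrow> x \<in> C"
  shows "vs1.dim {x + y |x y. x \<in> A \<and> y \<in> C} = vs1.dim C + vs2.dim (f ` A)"
proof -
  interpret f: Vector_Spaces.linear s1 s2 f by (fact lin)
  let ?S = "{x + y |x y. x \<in> A \<and> y \<in> C}"
  have f_sum: "f (x + y) = f x" if "y \<in> C" for x y using that C_kernel f.add by simp
  have "{z \<in> ?S. f z = 0} = C"
  proof
    show "{z \<in> ?S. f z = 0} \<subseteq> C"
      using f_sum A_kernel vs1.subspace_add[OF C(1)] by auto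
    show "C \<subseteq> {z \<in> ?S. f z = 0}"
      using vs1.subspace_0[OF A(1)] C_kernel by force
  qed
  moreover have "f ` ?S = f ` A"
    using f_sum vs1.subspace_0[OF C(1)] by (force simp: image_iff)
  moreover have "?S \<subseteq> vs1.span G"
    using A(2) C(2) vs1.span_add by blast
  ultimately show ?thesis
    using dim_eq_dim_kernel_plus_dim_image[OF lin vs1.subspace_sums[OF A(1) C(1)] G] by simp
qed

lemma (in module) ssum_eq_left:
  assumes "subspace N" "subspace C" "C \<subseteq> N"
  shows "ssum N C = N"
proof
  show "ssum N C \<subseteq> N" unfolding ssum_def using assms subspace_add by blast
  show "N \<subseteq> ssum N C" unfolding ssum_def using subspace_0[OF assms(2)] by force
qed

interpretation Fq: vector_space "qs :: rat \<Rightarrow> 'f::field_char_0 \<Rightarrow> 'f"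
  by unfold_locales (simp_all add: qs_def algebra_simps of_rat_add of_rat_mult)

interpretation Tq: vector_space "bscale :: rat \<Rightarrow> ('f \<Rightarrow> 'f \<Rightarrow> rat) \<Rightarrow> _"
  by unfold_locales (simp_all add: bscale_def fun_eq_iff algebra_simps)

interpretation Sq: vector_space "sscale :: rat \<Rightarrow> (('f \<Rightarrow> 'f \<Rightarrow> rat) \<Rightarrow> rat) \<Rightarrow> _"
  by unfold_locales (simp_all add: sscale_def fun_eq_iff algebra_simps)

interpretation SF: vector_space_pair "sscale :: rat \<Rightarrow> (('f::field_char_0 \<Rightarrow> 'f \<Rightarrow> rat) \<Rightarrow> rat) \<Rightarrow> _"
  "qs :: rat \<Rightarrow> 'f \<Rightarrow> 'f" ..

lemma sum_apply: "sum f A x = (\<Sum>a\<in>A. f a x)"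
  by (induction A rule: infinite_finite_induct) auto

definition rat_linear :: "('f::field_char_0 \<Rightarrow> rat) \<Rightarrow> bool" where
  "rat_linear h \<longleftrightarrow> (\<forall>x y. h (x + y) = h x + h y) \<and> (\<forall>q x. h (of_rat q * x) = q * h x)"

lemma rat_linear_zero: "rat_linear h \<Longrightarrow> h 0 = 0"
  unfolding rat_linear_def by (metis add_cancel_right_right add_0)

lemma rat_linear_diff:
  assumes "rat_linear h" shows "h (x - y) = h x - h y"
  using assms[unfolded rat_linear_def] by (metis add_diff_cancel diff_add_cancel)

lemma rat_linear_sum:
  assumes "rat_linear h"
  shows "h (\<Sum>i\<in>I. of_rat (c i) * v i) = (\<Sum>i\<in>I. c i * h (v i))"
  using assms rat_linear_zero[OF assms]
  by (induction I rule: infinite_finite_induct) (simp_all add: rat_linear_def)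

lemma rat_linear_mult_const: "rat_linear h \<Longrightarrow> rat_linear (\<lambda>x. h x * k)"
  by (simp add: rat_linear_def distrib_right)

lemma rat_linear_const_mult: "rat_linear h \<Longrightarrow> rat_linear (\<lambda>x. k * h x)"
  by (simp add: rat_linear_def distrib_left mult.left_commute)

definition rat_bilinear :: "('f::field_char_0 \<Rightarrow> 'f \<Rightarrow> rat) \<Rightarrow> bool" where
  "rat_bilinear y \<longleftrightarrow> (\<forall>d. rat_linear (\<lambda>c. y c d)) \<and> (\<forall>c. rat_linear (y c))"

lemma subspace_rat_bilinear: "Tq.subspace {y. rat_bilinear y}"
  unfolding Tq.subspace_def rat_bilinear_def rat_linear_def
  by (simp add: bscale_def algebra_simps)

lemma Lambda1_apply:
  assumes "y \<in> Lambda1" shows "y c d = y 1 (c * d)"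
proof -
  have "lmul c y 1 d = rmul y c 1 d" using assms by (simp add: Lambda1_def)
  then show ?thesis by (simp add: lmul_def rmul_def)
qed

lemma Lambda1_subset_SymQ: "Lambda1 \<subseteq> SymQ"
proof
  fix y assume y: "y \<in> Lambda1"
  have "y d c = y c d" for c d using Lambda1_apply[OF y, of c d] Lambda1_apply[OF y, of d c]
    by (simp add: mult.commute)
  then show "y \<in> SymQ" using y by (simp add: SymQ_def Lambda1_def fun_eq_iff)
qed

lemma subspace_annihilator: "Sq.subspace {p \<in> SQ. \<forall>y\<in>Y. p y = 0}"
  unfolding Sq.subspace_def SQ_def using Sq.span_zero Sq.span_add Sq.span_scale
  by (auto simp: sscale_def)

lemma SQ_explicit:
  "p \<in> SQ \<Longrightarrow> \<exists>(n::nat) c s t. p = (\<Sum>i<n. sscale (c i) (sclass (s i) (t i)))"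
  unfolding SQ_def
proof (induction rule: Sq.span_induct_alt)
  case base
  show ?case by (rule exI[of _ 0]) simp
next
  case (step a x p)
  obtain s0 t0 where x: "x = sclass s0 t0" using step(1) by blast
  obtain n :: nat and c s t where p: "p = (\<Sum>i<n. sscale (c i) (sclass (s i) (t i)))" using step(2) by blast
  have "sscale a x + p = (\<Sum>i<Suc n. sscale ((c(n := a)) i) (sclass ((s(n := s0)) i) ((t(n := t0)) i)))"
    unfolding x p by (simp add: add.commute)
  then show ?case by blast
qed

lemma sclass_sum_apply:
  "y \<in> SymQ \<Longrightarrow> (\<Sum>i<(n::nat). sscale (c i) (sclass (s i) (t i))) y = (\<Sum>i<n. c i * y (s i) (t i))"
  by (simp add: sum_apply sscale_def sclass_def)

abbreviation coord :: "'f::field_char_0 \<Rightarrow> 'f \<Rightarrow> rat" where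
  "coord \<equiv> Fq.representation fbasis"

definition dual :: "'f::field_char_0 \<Rightarrow> 'f" where
  "dual b = (SOME d. \<forall>z. trF (d * z) = coord z b)"

definition trace_form :: "'f::field_char_0 \<Rightarrow> 'f \<Rightarrow> 'f \<Rightarrow> rat" where
  "trace_form l c d = trF (l * c * d)"

text \<open>\<open>evS\<close> is defined by a description and says nothing off \<open>SQ\<close>; this explicit formula is
  linear on all functionals and agrees with \<open>evS\<close> on \<open>SQ\<close>.\<close>
definition evaluation_fbasis :: "(('f::field_char_0 \<Rightarrow> 'f \<Rightarrow> rat) \<Rightarrow> rat) \<Rightarrow> 'f" where
  "evaluation_fbasis p = (\<Sum>b\<in>fbasis. qs (p (trace_form (dual b))) b)"

lemma linear_evaluation_fbasis: "Vector_Spaces.linear sscale qs evaluation_fbasis"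
  unfolding Vector_Spaces.linear_iff evaluation_fbasis_def
  using Sq.vector_space_axioms Fq.vector_space_axioms
  by (simp add: sscale_def qs_def of_rat_add of_rat_mult algebra_simps sum.distrib sum_distrib_left)

context
  assumes finite_dim: "\<exists>B::'f::field_char_0 set. finite B \<and> Fq.span B = UNIV"
begin

lemma fbasis: "finite (fbasis::'f set)" "Fq.independent (fbasis::'f set)" "Fq.span (fbasis::'f set) = UNIV"
proof -
  obtain B :: "'f set" where B: "finite B" "Fq.span B = UNIV" using finite_dim by blast
  obtain B' :: "'f set" where "Fq.independent B'" "UNIV \<subseteq> Fq.span B'"
    using Fq.basis_exists[of UNIV] by blast
  then have "\<exists>B::'f set. \<not> Fq.dependent B \<and> Fq.span B = UNIV" by blast
  then have "\<not> Fq.dependent (fbasis::'f set) \<and> Fq.span (fbasis::'f set) = UNIV"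
    unfolding fbasis_def by (rule someI_ex)
  then show "finite (fbasis::'f set)" "Fq.independent (fbasis::'f set)" "Fq.span (fbasis::'f set) = UNIV"
    using Fq.independent_span_bound[OF B(1)] B(2) by auto
qed

lemma sum_coord: "(\<Sum>b\<in>fbasis. of_rat (coord z b) * b) = (z::'f)"
  using Fq.sum_representation_eq[OF fbasis(2)] fbasis by (simp add: qs_def)

lemma coord_add: "coord (x + y) b = coord x b + coord (y::'f) b"
  using Fq.representation_add[OF fbasis(2)] fbasis(3) by simp

lemma coord_scale: "coord (of_rat q * x) b = q * coord (x::'f) b"
  using Fq.representation_scale[OF fbasis(2)] fbasis(3) by (simp add: qs_def)

lemma coord_sum_fbasis:
  assumes "b \<in> fbasis" shows "coord (\<Sum>b'\<in>fbasis. qs (u b') b') b = u (b::'f)"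
proof -
  have "coord (\<Sum>b'\<in>fbasis. qs (u b') b') b = (\<Sum>b'\<in>fbasis. coord (qs (u b') b') b)"
    by (simp add: Fq.representation_sum[OF fbasis(2)] fbasis(3) sum_apply)
  also have "\<dots> = (\<Sum>b'\<in>fbasis. u b' * (if b = b' then 1 else 0))"
    using Fq.representation_scale[OF fbasis(2)] Fq.representation_basis[OF fbasis(2)] fbasis(3)
    by (intro sum.cong) auto
  also have "\<dots> = u b" using assms fbasis(1) by (simp add: if_distrib cong: if_cong)
  finally show ?thesis .
qed

lemma rat_linear_expand:
  assumes "rat_linear h" shows "h z = (\<Sum>b\<in>fbasis. coord z b * h (b::'f))"
  using rat_linear_sum[OF assms, of "coord z" id fbasis] by (simp add: sum_coord)

lemma rat_linear_trF_mult: "rat_linear (\<lambda>x. trF (l * (x::'f)))"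
  unfolding rat_linear_def trF_def
proof (intro conjI allI)
  show "(\<Sum>b\<in>fbasis. coord (l * (x + y) * b) b) =
    (\<Sum>b\<in>fbasis. coord (l * x * b) b) + (\<Sum>b\<in>fbasis. coord (l * y * b) b)" for x y
    by (simp add: algebra_simps coord_add sum.distrib)
  fix q x
  have "l * (of_rat q * x) * b = of_rat q * (l * x * b)" for b by (simp add: ac_simps)
  then show "(\<Sum>b\<in>fbasis. coord (l * (of_rat q * x) * b) b) = q * (\<Sum>b\<in>fbasis. coord (l * x * b) b)"
    by (simp only: coord_scale sum_distrib_left)
qed

lemma trF_nondegenerate:
  assumes "\<And>l. trF (l * v) = 0" shows "(v::'f) = 0"
proof (rule ccontr)
  assume "v \<noteq> 0"
  have "fbasis \<noteq> ({}::'f set)"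
  proof
    assume "fbasis = ({}::'f set)"
    then have "(1::'f) \<in> {0}" using fbasis(3) Fq.span_empty by (metis UNIV_I)
    then show False by simp
  qed
  moreover have "coord b b = 1" if "b \<in> fbasis" for b :: 'f
    using Fq.representation_basis[OF fbasis(2) that] by simp
  ultimately have "trF (1::'f) \<noteq> 0" using fbasis(1) by (simp add: trF_def)
  moreover have "inverse v * v = 1" using \<open>v \<noteq> 0\<close> by simp
  ultimately show False using assms[of "inverse v"] by simp
qed

lemma trF_mult_eqI:
  assumes "\<And>l. trF (l * v) = trF (l * w)" shows "(v::'f) = w"
  using trF_nondegenerate[of "v - w"] rat_linear_diff[OF rat_linear_trF_mult] assms by simp

lemma trF_fbasis_eq_0_imp_eq_0:
  assumes "\<And>b. b \<in> fbasis \<Longrightarrow> trF (b * x) = 0" shows "(x::'f) = 0"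
proof (rule trF_nondegenerate)
  fix l
  show "trF (l * x) = 0"
    using rat_linear_expand[OF rat_linear_trF_mult[of x], of l] assms by (simp add: mult.commute)
qed

text \<open>\<open>\<phi>\<close> sends \<open>x\<close> to the vector with coordinates \<open>trF (b * x)\<close>; it is injective by
  nondegeneracy, hence onto, and a preimage of \<open>b0\<close> is the dual basis vector.\<close>
lemma dual_exists:
  assumes "b0 \<in> fbasis" shows "\<exists>d. \<forall>z. trF (d * z) = coord z (b0::'f)"
proof -
  interpret Ffin: finite_dimensional_vector_space "qs :: rat \<Rightarrow> 'f \<Rightarrow> 'f" fbasis
    by unfold_locales (use fbasis in auto)
  define \<phi> where "\<phi> x = (\<Sum>b\<in>fbasis. qs (trF (b * x)) b)" for x :: 'f
  have tr_add: "trF (b * (x + y)) = trF (b * x) + trF (b * y)"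
    and tr_scale: "trF (b * qs c x) = c * trF (b * x)" for b x y :: 'f and c
    using rat_linear_trF_mult[of b] by (simp_all add: rat_linear_def qs_def)
  have "\<phi> (x + y) = \<phi> x + \<phi> y" for x y
    by (simp add: \<phi>_def tr_add Fq.scale_left_distrib sum.distrib)
  moreover have "\<phi> (qs c x) = qs c (\<phi> x)" for c x
    by (simp add: \<phi>_def tr_scale Fq.scale_sum_right)
  ultimately have lin: "Vector_Spaces.linear qs qs \<phi>"
    unfolding Vector_Spaces.linear_iff using Fq.vector_space_axioms by blast
  have coord_\<phi>: "coord (\<phi> x) b = trF (b * x)" if "b \<in> fbasis" for x b
    unfolding \<phi>_def using coord_sum_fbasis[OF that] .
  have "x = 0" if "\<phi> x = 0" for x
    using coord_\<phi>[of _ x] \<open>\<phi> x = 0\<close>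
    by (intro trF_fbasis_eq_0_imp_eq_0) (simp add: Fq.representation_zero)
  then have "inj \<phi>"
    using Vector_Spaces.linear.axioms(3)[OF lin] module_hom.inj_iff_eq_0 by blast
  then obtain d where d: "\<phi> d = b0" using Ffin.linear_inj_imp_surj[OF lin] by (metis surjD)
  have d_b: "trF (d * b) = (if b = b0 then 1 else 0)" if "b \<in> fbasis" for b
    using coord_\<phi>[OF that, of d] d Fq.representation_basis[OF fbasis(2) assms]
    by (auto simp: mult.commute)
  have "trF (d * z) = coord z b0" for z
  proof -
    have "trF (d * z) = (\<Sum>b\<in>fbasis. coord z b * (if b = b0 then 1 else 0))"
      unfolding rat_linear_expand[OF rat_linear_trF_mult[of d], of z]
      by (intro sum.cong refl) (simp add: d_b)
    also have "\<dots> = coord z b0" using assms fbasis(1) by (simp add: if_distrib cong: if_cong)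
    finally show ?thesis .
  qed
  then show ?thesis by blast
qed

lemma trF_dual: "b \<in> fbasis \<Longrightarrow> trF (dual b * z) = coord z (b::'f)"
  unfolding dual_def using someI_ex[OF dual_exists] by blast

lemma rat_bilinear_ptens: "rat_bilinear (ptens s (t::'f))"
  unfolding rat_bilinear_def ptens_def tpair_def
  using rat_linear_mult_const[OF rat_linear_trF_mult[of s]] rat_linear_const_mult[OF rat_linear_trF_mult[of t]]
  by blast

lemma TensQ_rat_bilinear: "y \<in> TensQ \<Longrightarrow> rat_bilinear (y :: 'f \<Rightarrow> 'f \<Rightarrow> rat)"
  unfolding TensQ_def
  by (induction rule: Tq.span_induct) (use subspace_rat_bilinear rat_bilinear_ptens in auto)

lemma rat_bilinear_expand:
  assumes "rat_bilinear y"
  shows "y s t = (\<Sum>b1\<in>fbasis. \<Sum>b2\<in>fbasis. coord s b1 * coord t b2 * y b1 (b2::'f))"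
proof -
  have lin1: "rat_linear (\<lambda>c. y c t)" and lin2: "rat_linear (y c)" for c
    using assms by (simp_all add: rat_bilinear_def)
  have "y s t = (\<Sum>b1\<in>fbasis. coord s b1 * y b1 t)"
    using rat_linear_expand[OF lin1, of s] by simp
  also have "\<dots> = (\<Sum>b1\<in>fbasis. coord s b1 * (\<Sum>b2\<in>fbasis. coord t b2 * y b1 b2))"
    by (rule sum.cong[OF refl]) (simp only: rat_linear_expand[OF lin2, of _ t])
  also have "\<dots> = (\<Sum>b1\<in>fbasis. \<Sum>b2\<in>fbasis. coord s b1 * coord t b2 * y b1 b2)"
    by (simp only: sum_distrib_left mult.assoc)
  finally show ?thesis .
qed

lemma rat_bilinear_trace_form: "rat_bilinear (trace_form (l::'f))"
proof -
  have "(\<lambda>c. trace_form l c d) = (\<lambda>c. trF ((l * d) * c))" for d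
    by (simp add: trace_form_def ac_simps)
  moreover have "trace_form l c = (\<lambda>d. trF ((l * c) * d))" for c
    by (simp add: trace_form_def fun_eq_iff)
  ultimately show ?thesis
    unfolding rat_bilinear_def using rat_linear_trF_mult by simp
qed

lemma trace_form_in_TensQ: "trace_form (l::'f) \<in> TensQ"
proof -
  let ?Y = "\<Sum>(b1, b2)\<in>fbasis \<times> fbasis. bscale (trF (l * b1 * b2)) (ptens (dual b1) (dual b2))"
  have "?Y \<in> TensQ"
    unfolding TensQ_def split_def
    by (intro Tq.span_sum Tq.span_scale Tq.span_base) blast
  moreover have "?Y = trace_form l"
  proof (intro ext)
    fix c d
    have "?Y c d = (\<Sum>(b1, b2)\<in>fbasis \<times> fbasis. coord c b1 * coord d b2 * trace_form l b1 b2)"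
      unfolding sum_apply split_def
    proof (rule sum.cong[OF refl])
      fix p :: "'f \<times> 'f" assume "p \<in> fbasis \<times> fbasis"
      then have "trF (dual (fst p) * c) = coord c (fst p)" "trF (dual (snd p) * d) = coord d (snd p)"
        by (auto simp: trF_dual)
      then show "bscale (trF (l * fst p * snd p)) (ptens (dual (fst p)) (dual (snd p))) c d =
        coord c (fst p) * coord d (snd p) * trace_form l (fst p) (snd p)"
        by (simp add: bscale_def ptens_def tpair_def trace_form_def mult.commute)
    qed
    also have "\<dots> = trace_form l c d"
      by (simp only: sum.cartesian_product[symmetric] rat_bilinear_expand[OF rat_bilinear_trace_form, symmetric])
    finally show "?Y c d = trace_form l c d" .
  qed
  ultimately show ?thesis by simp
qed

lemma trace_form_in_Lambda1: "trace_form (l::'f) \<in> Lambda1"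
  using trace_form_in_TensQ by (simp add: Lambda1_def lmul_def rmul_def trace_form_def fun_eq_iff ac_simps)

lemma sclass_sum_trace_form:
  "(\<Sum>i<(n::nat). sscale (c i) (sclass (s i) (t i))) (trace_form l) = trF (l * (\<Sum>i<n. qs (c i) (s i * t i :: 'f)))"
proof -
  have "trF (l * (\<Sum>i<n. of_rat (c i) * (s i * t i))) = (\<Sum>i<n. c i * trF (l * (s i * t i)))"
    by (rule rat_linear_sum[OF rat_linear_trF_mult])
  then show ?thesis
    using sclass_sum_apply[OF subsetD[OF Lambda1_subset_SymQ trace_form_in_Lambda1]]
    by (simp add: qs_def trace_form_def mult.assoc)
qed

lemma evS_sclass_sum: "evS (\<Sum>i<(n::nat). sscale (c i) (sclass (s i) (t i))) = (\<Sum>i<n. qs (c i) (s i * t i :: 'f))"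
  unfolding evS_def
proof (rule the_equality)
  fix v assume "\<exists>(n'::nat) c' s' t'. (\<Sum>i<n. sscale (c i) (sclass (s i) (t i))) = (\<Sum>i<n'. sscale (c' i) (sclass (s' i) (t' i)))
     \<and> v = (\<Sum>i<n'. qs (c' i) (s' i * t' i))"
  then obtain n' :: nat and c' s' t'
    where p: "(\<Sum>i<n. sscale (c i) (sclass (s i) (t i))) = (\<Sum>i<n'. sscale (c' i) (sclass (s' i) (t' i)))"
      and v: "v = (\<Sum>i<n'. qs (c' i) (s' i * t' i))" by blast
  have "trF (l * v) = trF (l * (\<Sum>i<n. qs (c i) (s i * t i)))" for l
    unfolding v sclass_sum_trace_form[symmetric] p ..
  then show "v = (\<Sum>i<n. qs (c i) (s i * t i))" by (rule trF_mult_eqI)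
qed (rule exI[of _ n], rule exI[of _ c], rule exI[of _ s], rule exI[of _ t], simp)

lemma trF_evS: "p \<in> SQ \<Longrightarrow> trF (l * evS p) = p (trace_form (l::'f))"
  using SQ_explicit[of p] evS_sclass_sum sclass_sum_trace_form by auto

lemma evS_eq_evaluation_fbasis:
  assumes "p \<in> SQ" shows "evS p = (evaluation_fbasis p :: 'f)"
proof -
  have "evS p = (\<Sum>b\<in>fbasis. qs (coord (evS p) b) b)"
    using Fq.sum_representation_eq[OF fbasis(2)] fbasis by simp
  also have "\<dots> = evaluation_fbasis p"
    unfolding evaluation_fbasis_def
  proof (rule sum.cong[OF refl])
    fix b :: 'f assume "b \<in> fbasis"
    then show "qs (coord (evS p) b) b = qs (p (trace_form (dual b))) b"
      using trF_dual[of b "evS p"] trF_evS[OF assms, of "dual b"] by simp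
  qed
  finally show ?thesis .
qed

lemma evS_eq_0_iff:
  assumes "p \<in> SQ" shows "evS p = (0::'f) \<longleftrightarrow> p \<in> AnnLambda1"
proof
  assume "p \<in> AnnLambda1"
  then have "trF (l * evS p) = trF (l * 0)" for l
    using trF_evS[OF assms] trace_form_in_Lambda1 rat_linear_zero[OF rat_linear_trF_mult]
    by (simp add: AnnLambda1_def)
  then show "evS p = 0" by (rule trF_mult_eqI)
next
  assume ev0: "evS p = 0"
  obtain n :: nat and c s t where p: "p = (\<Sum>i<n. sscale (c i) (sclass (s i) (t i)))"
    using SQ_explicit[OF assms] by blast
  have "p y = 0" if y: "y \<in> Lambda1" for y
  proof -
    have lin: "rat_linear (y 1)"
      using y TensQ_rat_bilinear by (simp add: Lambda1_def rat_bilinear_def)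
    have "p y = (\<Sum>i<n. c i * y 1 (s i * t i))"
      using sclass_sum_apply[OF subsetD[OF Lambda1_subset_SymQ y]] Lambda1_apply[OF y] by (simp add: p)
    also have "\<dots> = y 1 (evS p)"
      by (simp add: p evS_sclass_sum qs_def rat_linear_sum[OF lin])
    also have "\<dots> = 0" using ev0 rat_linear_zero[OF lin] by simp
    finally show ?thesis .
  qed
  then show "p \<in> AnnLambda1" using assms by (simp add: AnnLambda1_def)
qed

lemma SQ_subset_span_sclass_fbasis:
  "SQ \<subseteq> Sq.span ((\<lambda>(b1, b2). sclass b1 b2) ` (fbasis \<times> (fbasis::'f set)))"
proof -
  let ?G = "(\<lambda>(b1, b2). sclass b1 b2) ` (fbasis \<times> (fbasis::'f set))"
  have expand: "sclass s t = (\<Sum>(b1, b2)\<in>fbasis \<times> fbasis. sscale (coord s b1 * coord t b2) (sclass b1 b2))"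
    for s t :: 'f
  proof (rule ext)
    fix y
    show "sclass s t y = (\<Sum>(b1, b2)\<in>fbasis \<times> fbasis. sscale (coord s b1 * coord t b2) (sclass b1 b2)) y"
    proof (cases "y \<in> SymQ")
      case True
      then have "rat_bilinear y" using TensQ_rat_bilinear by (simp add: SymQ_def)
      then show ?thesis
        using True rat_bilinear_expand[of y s t]
        by (simp add: sclass_def sum_apply sscale_def split_def sum.cartesian_product)
    next
      case False
      then show ?thesis by (simp add: sclass_def sum_apply sscale_def split_def)
    qed
  qed
  have "sclass s t \<in> Sq.span ?G" for s t :: 'f
    unfolding expand[of s t] split_def by (intro Sq.span_sum Sq.span_scale Sq.span_base) auto
  then show ?thesis
    unfolding SQ_def by (intro Sq.span_minimal) auto
qed

lemma dimS_ssum_eq_dimS_plus_dimF_evS: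
  assumes A: "Sq.subspace A" "A \<subseteq> SQ" and C: "Sq.subspace C" "C \<subseteq> AnnLambda1"
    and A_C: "A \<inter> AnnLambda1 \<subseteq> C"
  shows "dimS (ssum A C) = dimS C + dimF (evS ` A :: 'f set)"
proof -
  let ?G = "(\<lambda>(b1, b2). sclass b1 b2) ` (fbasis \<times> (fbasis::'f set))"
  have C_SQ: "C \<subseteq> SQ" using C(2) by (auto simp: AnnLambda1_def)
  have ev: "evS x = (evaluation_fbasis x :: 'f)" if "x \<in> SQ" for x
    using evS_eq_evaluation_fbasis[OF that] .
  have "dimS (ssum A C) = dimS C + dimF (evaluation_fbasis ` A)"
    unfolding dimS_def dimF_def ssum_def
  proof (rule SF.dim_sums_eq_dim_plus_dim_image[OF linear_evaluation_fbasis _ A(1) _ C(1)])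
    show "finite ?G" using fbasis(1) by simp
    show "A \<subseteq> Sq.span ?G" "C \<subseteq> Sq.span ?G"
      using A(2) C_SQ SQ_subset_span_sclass_fbasis by auto
    show "evaluation_fbasis x = 0" if "x \<in> C" for x
      using that C(2) C_SQ ev evS_eq_0_iff by auto
    show "x \<in> C" if "x \<in> A" "evaluation_fbasis x = 0" for x
      using that A(2) A_C ev evS_eq_0_iff by auto
  qed
  moreover have "evaluation_fbasis ` A = evS ` A" using A(2) ev by (intro image_cong) auto
  ultimately show ?thesis by simp
qed

end

theorem proposition3p7:
  fixes g :: nat and I :: "'f::field_char_0 set"
    and V :: "'v set" and E :: "'e set" and ends :: "'e \<Rightarrow> 'v \<times> 'v" and w :: "'e \<Rightarrow> 'f"
    and AnnU :: "(('f \<Rightarrow> 'f \<Rightarrow> rat) \<Rightarrow> rat) set"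
  assumes "totally_real_number_field TYPE('f) g"
    and "is_lattice I"
    and "weighted_stable_curve g I V E ends w"
    and "module.subspace sscale AnnU" and "AnnU \<subseteq> NS (weights E w)"
  shows "(subtorus_dim (NS (weights E w)) (AnnT (weights E w))
           - subtorus_dim (NS (weights E w)) (ssum AnnU (AnnT (weights E w)))
         = int (dimF (evS ` AnnU)))
         \<and> (subtorus_dim (NS (weights E w)) (AnnT (weights E w)) = int (dimF (evS ` NS (weights E w))))"
proof -
  have finite_dim: "\<exists>B::'f set. finite B \<and> Fq.span B = UNIV"
    using assms(1) unfolding totally_real_number_field_def by blast
  define N where "N = NS (weights E w)"
  define C where "C = AnnT (weights E w)"
  have N: "Sq.subspace N" "N \<subseteq> SQ"
    unfolding N_def NS_def using subspace_annihilator by auto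
  have C: "Sq.subspace C" "C \<subseteq> AnnLambda1" "C \<subseteq> N"
    unfolding C_def AnnT_def N_def[symmetric] AnnLambda1_def
    using Sq.subspace_inter[OF N(1) subspace_annihilator] by auto
  have C_eq: "N \<inter> AnnLambda1 = C" unfolding C_def AnnT_def N_def ..
  have "dimS (ssum AnnU C) = dimS C + dimF (evS ` AnnU)"
    using dimS_ssum_eq_dimS_plus_dimF_evS[OF finite_dim assms(4) _ C(1,2)] assms(5) N(2) C_eq
    unfolding N_def by blast
  moreover have "dimS N = dimS C + dimF (evS ` N)"
    using dimS_ssum_eq_dimS_plus_dimF_evS[OF finite_dim N C(1,2)] Sq.ssum_eq_left[OF N(1) C(1,3)] C_eq by simp
  ultimately show ?thesis
    unfolding N_def[symmetric] C_def[symmetric] subtorus_dim_def by simp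
qed

end
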